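(* Let $\bm{H}_1,\dots,\bm{H}_N$ be random matrices with values in $\mathbb{C}^{N_R\times N_T}$ (sub-channels of a frequency-selective MIMO channel), let $W,\rho>0$, and let $c=\frac{W}{N}\sum_{j=1}^N\log_2\det(\bm{I}_{N_R}+\frac{\rho}{N_T}\bm{H}_j\bm{H}_j^\ast)$ be the capacity when channel side information is known only at the receiver. If for every $j\in\{1,\dots,N\}$ there is $\theta>0$ with $\mathbb{E}\big[\prod_{i=1}^{r(\bm{H}_j)}(1+\lambda_i^j)^\theta\big]<\infty$, where $r(\bm{H}_j)$ is the rank of $\bm{H}_j$ and $\lambda_i^j$ are the (positive) eigenvalues of $\bm{H}_j\bm{H}_j^\ast$, then the distribution of $c$ is light-tailed.
   Context: A nonnegative random variable $X$ is light-tailed if $\Pr(X>x)=O(e^{-\theta x})$ for some $\theta>0$, equivalently $\mathbb{E}[e^{\theta X}]<\infty$ for some $\theta>0$. *)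

theory Defs
  imports "HOL-Analysis.Analysis" "HOL-Probability.Probability"
          "HOL-Computational_Algebra.Fundamental_Theorem_Algebra"
begin

definition conj_transpose :: "complex ^'n ^'m \<Rightarrow> complex ^'m ^'n" where
  "conj_transpose A = (\<chi> i j. cnj (A $ j $ i))"

definition charpoly :: "complex ^'n ^'n \<Rightarrow> complex poly" where
  "charpoly A = det (\<chi> i j. (if i = j then [:0, 1:] else 0) - [: A $ i $ j :])"

definition eigenvalues_mset :: "complex ^'n ^'n \<Rightarrow> complex multiset" where
  "eigenvalues_mset A = proots (charpoly A)"

text \<open>The positive eigenvalues of H H^* (with multiplicity): there are exactly rank H of them.\<close>
definition pos_eigs_HHs :: "complex ^'t ^'r \<Rightarrow> real multiset" where
  "pos_eigs_HHs H = image_mset Re (filter_mset (\<lambda>z. z \<noteq> 0) (eigenvalues_mset (H ** conj_transpose H)))"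

definition capacity_csir ::
  "real \<Rightarrow> real \<Rightarrow> nat \<Rightarrow> (nat \<Rightarrow> complex ^'t ^'r) \<Rightarrow> real" where
  "capacity_csir W \<rho> N H =
     W / real N * (\<Sum>j = 1..N.
        log 2 (Re (det (mat 1 + of_real (\<rho> / real CARD('t)) *s (H j ** conj_transpose (H j))))))"

definition light_tailed :: "'a measure \<Rightarrow> ('a \<Rightarrow> real) \<Rightarrow> bool" where
  "light_tailed M X \<longleftrightarrow> (\<exists>\<theta>>0. (\<integral>\<^sup>+ x. ennreal (exp (\<theta> * X x)) \<partial>M) < \<infinity>)"

end

theory Submission
  imports Defs
begin

(* The eigenvalues of H H^* are real and nonnegative, being Rayleigh quotients |H^* v|^2 / |v|^2.
   Hence D = det (I + r H H^* ) is the product of 1 + r l over the positive eigenvalues l of H H^*,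
   so that 1 <= D <= max 1 r ^ N_R * prod (1 + l).  If t is the least of the exponents theta_j, then
   exp ((t ln 2 / W) c) = prod_j D_j^(t/N) <= max_j D_j^t <= sum_j D_j^t, and every integral of
   D_j^t is finite since D_j^t <= const * prod (1 + l)^theta_j. *)

lemma of_real_prod_mset:
  "of_real (\<Prod>x\<in>#M. f x) = (\<Prod>x\<in>#M. (of_real (f x) :: 'a::{real_algebra_1, comm_monoid_mult}))"
  by (induction M) simp_all

lemma prod_mset_filter_mset:
  assumes "\<And>x. x \<in># M \<Longrightarrow> \<not> P x \<Longrightarrow> f x = 1"
  shows "(\<Prod>x\<in>#filter_mset P M. f x) = (\<Prod>x\<in>#M. f x)"
  using assms by (induction M) auto

lemma prod_mset_nonneg:
  fixes f :: "'a \<Rightarrow> 'b::linordered_semidom"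
  assumes "\<And>x. x \<in># M \<Longrightarrow> 0 \<le> f x"
  shows "0 \<le> (\<Prod>x\<in>#M. f x)"
  using assms by (induction M) auto

lemma prod_mset_mono:
  fixes f g :: "'a \<Rightarrow> 'b::linordered_semidom"
  assumes "\<And>x. x \<in># M \<Longrightarrow> 0 \<le> f x \<and> f x \<le> g x"
  shows "(\<Prod>x\<in>#M. f x) \<le> (\<Prod>x\<in>#M. g x)"
  using assms by (induction M) (auto 4 3 intro!: mult_mono prod_mset_nonneg intro: order.trans)

lemma one_le_prod_mset:
  fixes f :: "'a \<Rightarrow> 'b::linordered_semidom"
  assumes "\<And>x. x \<in># M \<Longrightarrow> 1 \<le> f x"
  shows "1 \<le> (\<Prod>x\<in>#M. f x)"
  using prod_mset_mono[of M "\<lambda>_. 1" f] assms by simp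

lemma prod_mset_powr:
  fixes f :: "'a \<Rightarrow> real"
  assumes "\<And>x. x \<in># M \<Longrightarrow> 0 \<le> f x"
  shows "(\<Prod>x\<in>#M. f x) powr t = (\<Prod>x\<in>#M. f x powr t)"
  using assms by (induction M) (simp_all add: powr_mult prod_mset_nonneg)

lemma prod_powr_le_sum_powr:
  fixes y :: "'a \<Rightarrow> real"
  assumes J: "finite J" "J \<noteq> {}" and y: "\<And>j. j \<in> J \<Longrightarrow> 0 \<le> y j" and t: "0 \<le> t"
  shows "(\<Prod>j\<in>J. y j powr (t / card J)) \<le> (\<Sum>j\<in>J. y j powr t)"
proof -
  have "Max (y ` J) \<in> y ` J"
    using J by simp
  then obtain j0 where "j0 \<in> J" and "y j0 = Max (y ` J)"
    by (metis imageE)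
  then have j0: "j0 \<in> J" "\<And>j. j \<in> J \<Longrightarrow> y j \<le> y j0"
    using J by simp_all
  have "(\<Prod>j\<in>J. y j powr (t / card J)) \<le> (\<Prod>j\<in>J. y j0 powr (t / card J))"
    using y j0 t by (intro prod_mono) (auto intro: powr_mono2)
  also have "\<dots> = y j0 powr t"
    using J by (cases "y j0 = 0") (simp_all add: powr_power card_gt_0_iff)
  also have "\<dots> \<le> (\<Sum>j\<in>J. y j powr t)"
    using J j0 by (intro member_le_sum) auto
  finally show ?thesis .
qed

lemma vector_of_real_nth [simp]: "(of_real r :: 'a::real_algebra_1^'n) $ i = of_real r"
  by (simp add: of_real_def)

lemma poly_det:
  fixes M :: "'a::comm_ring_1 poly^'n^'n"
  shows "poly (det M) z = det (\<chi> i j. poly (M $ i $ j) z)"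
  unfolding det_def by (simp add: poly_sum poly_prod)

lemma charpoly_eq_prod_diagonal_plus_lower_degree:
  fixes A :: "complex^'n^'n"
  obtains R where "charpoly A = (\<Prod>i\<in>UNIV. [:- A $ i $ i, 1:]) + R" "degree R < CARD('n)"
proof -
  define M :: "complex poly^'n^'n"
    where "M = (\<chi> i j. (if i = j then [:0, 1:] else 0) - [: A $ i $ j :])"
  define T where "T p = of_int (sign p) * (\<Prod>i\<in>UNIV. M $ i $ p i)" for p
  let ?P = "{p. p permutes (UNIV :: 'n set)}"
  have "charpoly A = (\<Sum>p\<in>?P. T p)"
    unfolding charpoly_def det_def M_def[symmetric] T_def ..
  also have "\<dots> = T id + (\<Sum>p\<in>?P - {id}. T p)"
    by (rule sum.remove) (simp_all add: permutes_id finite_permutations)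
  finally have "charpoly A = T id + (\<Sum>p\<in>?P - {id}. T p)" .
  moreover have "T id = (\<Prod>i\<in>UNIV. [:- A $ i $ i, 1:])"
    by (simp add: T_def M_def)
  moreover have "degree (\<Sum>p\<in>?P - {id}. T p) < CARD('n)"
  proof (rule degree_sum_less)
    fix p assume "p \<in> ?P - {id}"
    then obtain k where k: "p k \<noteq> k" by (auto simp: fun_eq_iff)
    have "degree (T p) \<le> degree (\<Prod>i\<in>UNIV. M $ i $ p i)"
      unfolding T_def using degree_mult_le[of "of_int (sign p)"] by simp
    also have "\<dots> \<le> (\<Sum>i\<in>UNIV. degree (M $ i $ p i))"
      using degree_prod_sum_le[of UNIV "\<lambda>i. M $ i $ p i"] by simp
    also have "\<dots> \<le> (\<Sum>i\<in>UNIV. if p i = i then 1 else 0)"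
      \<comment> \<open>off-diagonal entries of \<open>X I - A\<close> are constants\<close>
      by (rule sum_mono) (auto simp: M_def degree_diff_le)
    also have "\<dots> < (\<Sum>i\<in>(UNIV::'n set). 1)"
      using k by (intro sum_strict_mono_ex1) auto
    finally show "degree (T p) < CARD('n)" by simp
  qed simp
  ultimately show ?thesis by (intro that[of "\<Sum>p\<in>?P - {id}. T p"]) simp_all
qed

lemma degree_charpoly: "degree (charpoly (A :: complex^'n^'n)) = CARD('n)"
proof -
  obtain R where R: "charpoly A = (\<Prod>i\<in>UNIV. [:- A $ i $ i, 1:]) + R" "degree R < CARD('n)"
    by (rule charpoly_eq_prod_diagonal_plus_lower_degree)
  have "degree (\<Prod>i\<in>UNIV. [:- A $ i $ i, 1:]) = CARD('n)"
    by (subst degree_prod_eq_sum_degree) auto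
  with R show ?thesis by (simp add: degree_add_eq_left)
qed

lemma lead_coeff_charpoly: "lead_coeff (charpoly (A :: complex^'n^'n)) = 1"
proof -
  obtain R where R: "charpoly A = (\<Prod>i\<in>UNIV. [:- A $ i $ i, 1:]) + R" "degree R < CARD('n)"
    by (rule charpoly_eq_prod_diagonal_plus_lower_degree)
  have "lead_coeff (\<Prod>i\<in>UNIV. [:- A $ i $ i, 1:]) = 1"
    by (simp add: lead_coeff_prod)
  moreover have "degree (\<Prod>i\<in>UNIV. [:- A $ i $ i, 1:]) = CARD('n)"
    by (subst degree_prod_eq_sum_degree) auto
  ultimately have "coeff (\<Prod>i\<in>UNIV. [:- A $ i $ i, 1:]) CARD('n) = 1"
    by simp
  moreover have "lead_coeff (charpoly A) = coeff (charpoly A) CARD('n)"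
    by (simp add: degree_charpoly)
  ultimately show ?thesis
    using R by (simp add: coeff_eq_0)
qed

lemma size_eigenvalues_mset [simp]: "size (eigenvalues_mset (A :: complex^'n^'n)) = CARD('n)"
  by (simp add: eigenvalues_mset_def size_proots_complex degree_charpoly)

lemma det_mat_minus_eq_prod_eigenvalues:
  fixes A :: "complex^'n^'n"
  shows "det (mat z - A) = (\<Prod>\<mu>\<in>#eigenvalues_mset A. z - \<mu>)"
proof -
  have "charpoly A = (\<Prod>\<mu>\<in>#eigenvalues_mset A. [:- \<mu>, 1:])"
    using complex_poly_decompose_multiset[of "charpoly A"]
    by (simp only: eigenvalues_mset_def lead_coeff_charpoly smult_1_left)
  then have "poly (charpoly A) z = (\<Prod>\<mu>\<in>#eigenvalues_mset A. z - \<mu>)"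
    by (simp add: poly_prod_mset multiset.map_comp o_def)
  moreover have "poly (charpoly A) z = det (mat z - A)"
    unfolding charpoly_def poly_det by (intro arg_cong[where f = det]) (simp add: mat_def vec_eq_iff)
  ultimately show ?thesis by simp
qed

text \<open>Here \<open>of_real r\<close> is the constant vector of \<open>complex^'n\<close>, so \<open>*s\<close> scales every entry.\<close>
lemma det_one_plus_smult_eq_prod_eigenvalues:
  fixes A :: "complex^'n^'n"
  shows "det (mat 1 + of_real r *s A) = (\<Prod>\<mu>\<in>#eigenvalues_mset A. 1 + of_real r * \<mu>)"
proof (cases "r = 0")
  case False
  define z :: complex where "z = - 1 / of_real r"
  have z: "z \<noteq> 0" "\<And>\<mu>. z - \<mu> = z * (1 + of_real r * \<mu>)"
    using False by (simp_all add: z_def field_simps)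
  have "mat z - A = (\<chi> i. z *s (mat 1 + of_real r *s A) $ i)"
    using False by (simp add: vec_eq_iff mat_def z_def field_simps)
  then have "det (mat z - A) = z ^ CARD('n) * det (mat 1 + of_real r *s A)"
    by (simp only: det_rows_mul prod_constant vec_lambda_eta)
  moreover have "det (mat z - A) = z ^ CARD('n) * (\<Prod>\<mu>\<in>#eigenvalues_mset A. 1 + of_real r * \<mu>)"
    unfolding det_mat_minus_eq_prod_eigenvalues z(2) prod_mset.distrib by simp
  ultimately show ?thesis using z(1) by simp
qed simp

lemma eigenvalue_gram_real_nonneg:
  fixes H :: "complex^'t^'r"
  assumes "\<mu> \<in># eigenvalues_mset (H ** conj_transpose H)"
  shows "Im \<mu> = 0" and "0 \<le> Re \<mu>"
proof -
  let ?A = "H ** conj_transpose H"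
  have "det (mat \<mu> - ?A) = 0"
    using assms by (simp add: det_mat_minus_eq_prod_eigenvalues)
  then obtain v where "v \<noteq> 0" and "(mat \<mu> - ?A) *v v = 0"
    by (metis invertible_det_nz invertible_left_inverse matrix_left_invertible_ker)
  define w where "w = conj_transpose H *v v"
  have "mat \<mu> *v v = \<mu> *s v"
    by (simp add: vec_eq_iff matrix_vector_mult_def mat_def if_distrib[of "\<lambda>x. x * _"] cong: if_cong)
  then have Hw: "H *v w = \<mu> *s v"
    using \<open>(mat \<mu> - ?A) *v v = 0\<close>
    by (simp add: w_def matrix_vector_mul_assoc matrix_vector_mult_diff_rdistrib)
  define S R where "S = (\<Sum>i\<in>UNIV. (cmod (v $ i))\<^sup>2)" and "R = (\<Sum>k\<in>UNIV. (cmod (w $ k))\<^sup>2)"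
  have S_eq: "of_real S = (\<Sum>i\<in>UNIV. v $ i * cnj (v $ i))"
    and R_eq: "of_real R = (\<Sum>k\<in>UNIV. w $ k * cnj (w $ k))"
    by (simp_all only: S_def R_def of_real_sum complex_norm_square)
  \<comment> \<open>\<open>\<langle>v, H w\<rangle> = \<langle>H\<^sup>* v, w\<rangle>\<close>, written out coordinatewise\<close>
  have cnj_w: "cnj (w $ k) = (\<Sum>i\<in>UNIV. cnj (v $ i) * H $ i $ k)" for k
    by (simp add: w_def matrix_vector_mult_def conj_transpose_def mult.commute)
  have "(\<Sum>i\<in>UNIV. cnj (v $ i) * (H *v w) $ i) = (\<Sum>i\<in>UNIV. \<Sum>k\<in>UNIV. cnj (v $ i) * H $ i $ k * w $ k)"
    by (simp add: matrix_vector_mult_def sum_distrib_left mult.assoc)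
  also have "\<dots> = (\<Sum>k\<in>UNIV. \<Sum>i\<in>UNIV. cnj (v $ i) * H $ i $ k * w $ k)"
    by (rule sum.swap)
  also have "\<dots> = (\<Sum>k\<in>UNIV. cnj (w $ k) * w $ k)"
    by (simp add: cnj_w sum_distrib_right)
  finally have "(\<Sum>i\<in>UNIV. cnj (v $ i) * (H *v w) $ i) = (\<Sum>k\<in>UNIV. cnj (w $ k) * w $ k)" .
  then have "\<mu> * of_real S = of_real R"
    unfolding S_eq R_eq by (simp add: Hw sum_distrib_left mult_ac)
  moreover obtain i where "v $ i \<noteq> 0"
    using \<open>v \<noteq> 0\<close> by (auto simp: vec_eq_iff)
  then have "0 < S"
    unfolding S_def by (intro sum_pos2[where i = i]) auto
  ultimately have "\<mu> = of_real (R / S)"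
    by (simp add: eq_divide_eq)
  moreover have "0 \<le> R"
    unfolding R_def by (simp add: sum_nonneg)
  ultimately show "Im \<mu> = 0" and "0 \<le> Re \<mu>"
    using \<open>0 < S\<close> by simp_all
qed

lemma pos_eigs_HHs_pos: "l \<in># pos_eigs_HHs H \<Longrightarrow> 0 < l"
  using eigenvalue_gram_real_nonneg
  by (fastforce simp: pos_eigs_HHs_def complex_eq_iff)

lemma size_pos_eigs_HHs_le: "size (pos_eigs_HHs (H :: complex^'t^'r)) \<le> CARD('r)"
  using size_filter_mset_lesseq[of _ "eigenvalues_mset (H ** conj_transpose H)"]
  by (simp add: pos_eigs_HHs_def)

definition det_one_plus_gram :: "real \<Rightarrow> complex^'t^'r \<Rightarrow> real" where
  "det_one_plus_gram r H = Re (det (mat 1 + of_real r *s (H ** conj_transpose H)))"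

lemma det_one_plus_gram_eq_prod:
  "det_one_plus_gram r H = (\<Prod>l\<in>#pos_eigs_HHs H. 1 + r * l)"
proof -
  let ?E = "eigenvalues_mset (H ** conj_transpose H)"
  have "det (mat 1 + of_real r *s (H ** conj_transpose H)) = (\<Prod>\<mu>\<in>#?E. of_real (1 + r * Re \<mu>))"
    unfolding det_one_plus_smult_eq_prod_eigenvalues
    by (intro arg_cong[where f = prod_mset] image_mset_cong)
      (simp add: complex_eq_iff eigenvalue_gram_real_nonneg(1))
  also have "\<dots> = of_real (\<Prod>\<mu>\<in>#?E. 1 + r * Re \<mu>)"
    by (rule of_real_prod_mset[symmetric])
  finally have "det_one_plus_gram r H = (\<Prod>\<mu>\<in>#?E. 1 + r * Re \<mu>)"
    by (simp add: det_one_plus_gram_def)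
  also have "\<dots> = (\<Prod>\<mu>\<in>#filter_mset (\<lambda>z. z \<noteq> 0) ?E. 1 + r * Re \<mu>)"
    by (rule prod_mset_filter_mset[symmetric]) simp
  finally show ?thesis
    by (simp add: pos_eigs_HHs_def multiset.map_comp o_def)
qed

lemma one_le_det_one_plus_gram: "0 \<le> r \<Longrightarrow> 1 \<le> det_one_plus_gram r H"
  unfolding det_one_plus_gram_eq_prod
  by (intro one_le_prod_mset) (simp add: less_imp_le pos_eigs_HHs_pos)

lemma det_one_plus_gram_le:
  fixes H :: "complex^'t^'r"
  assumes "0 \<le> r"
  shows "det_one_plus_gram r H \<le> max 1 r ^ CARD('r) * (\<Prod>l\<in>#pos_eigs_HHs H. 1 + l)"
proof -
  have "1 + r * l \<le> max 1 r * (1 + l)" if "0 \<le> l" for l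
  proof -
    have "r * l \<le> max 1 r * l"
      using that by (intro mult_right_mono) auto
    then show ?thesis
      by (simp add: distrib_left add_mono)
  qed
  then have "det_one_plus_gram r H \<le> (\<Prod>l\<in>#pos_eigs_HHs H. max 1 r * (1 + l))"
    unfolding det_one_plus_gram_eq_prod using assms pos_eigs_HHs_pos[of _ H]
    by (intro prod_mset_mono) (simp add: less_imp_le)
  also have "\<dots> = max 1 r ^ size (pos_eigs_HHs H) * (\<Prod>l\<in>#pos_eigs_HHs H. 1 + l)"
    by (simp add: prod_mset.distrib)
  also have "\<dots> \<le> max 1 r ^ CARD('r) * (\<Prod>l\<in>#pos_eigs_HHs H. 1 + l)"
    using pos_eigs_HHs_pos[of _ H]
    by (intro mult_right_mono power_increasing size_pos_eigs_HHs_le prod_mset_nonneg)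
      (simp_all add: add_nonneg_nonneg less_imp_le)
  finally show ?thesis .
qed

lemma borel_measurable_det_one_plus_gram [measurable]:
  fixes f :: "'a \<Rightarrow> complex^'t^'r"
  assumes "f \<in> borel_measurable M"
  shows "(\<lambda>x. det_one_plus_gram r (f x)) \<in> borel_measurable M"
proof (rule borel_measurable_continuous_on[OF _ assms])
  show "continuous_on UNIV (det_one_plus_gram r :: complex^'t^'r \<Rightarrow> real)"
    unfolding det_one_plus_gram_def det_def
    by (simp add: mat_def matrix_matrix_mult_def conj_transpose_def) (intro continuous_intros)
qed

lemma nn_integral_det_one_plus_gram_powr_finite:
  fixes f :: "'a \<Rightarrow> complex^'t^'r"
  assumes f: "f \<in> borel_measurable M" and r: "0 \<le> r" and t: "0 \<le> t" "t \<le> \<theta>"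
    and fin: "(\<integral>\<^sup>+ x. ennreal (\<Prod>l\<in>#pos_eigs_HHs (f x). (1 + l) powr \<theta>) \<partial>M) < \<infinity>"
  shows "(\<integral>\<^sup>+ x. ennreal (det_one_plus_gram r (f x) powr t) \<partial>M) < \<infinity>"
proof -
  define K where "K = (max 1 r ^ CARD('r)) powr t"
  have "K > 0"
    unfolding K_def by simp
  have bound: "det_one_plus_gram r B powr t / K \<le> (\<Prod>l\<in>#pos_eigs_HHs B. (1 + l) powr \<theta>)"
    for B :: "complex^'t^'r"
  proof -
    define Q where "Q = (\<Prod>l\<in>#pos_eigs_HHs B. 1 + l)"
    have "1 \<le> Q"
      unfolding Q_def by (intro one_le_prod_mset) (simp add: less_imp_le pos_eigs_HHs_pos)
    have "det_one_plus_gram r B powr t \<le> (max 1 r ^ CARD('r) * Q) powr t"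
      using det_one_plus_gram_le[OF r, of B] one_le_det_one_plus_gram[OF r, of B] t
      by (intro powr_mono2) (simp_all add: Q_def)
    also have "\<dots> = K * Q powr t"
      using \<open>1 \<le> Q\<close> by (simp add: K_def powr_mult)
    also have "\<dots> \<le> K * Q powr \<theta>"
      using \<open>K > 0\<close> \<open>1 \<le> Q\<close> t by (intro mult_left_mono powr_mono) auto
    also have "Q powr \<theta> = (\<Prod>l\<in>#pos_eigs_HHs B. (1 + l) powr \<theta>)"
      unfolding Q_def by (rule prod_mset_powr) (simp add: add_nonneg_nonneg less_imp_le pos_eigs_HHs_pos)
    finally show ?thesis
      using \<open>K > 0\<close> by (simp add: field_simps)
  qed
  \<comment> \<open>Dividing by \<open>K\<close> keeps the integrand measurable; the eigenvalue product need not be.\<close>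
  have "(\<integral>\<^sup>+ x. ennreal (det_one_plus_gram r (f x) powr t) \<partial>M)
      = ennreal K * (\<integral>\<^sup>+ x. ennreal (det_one_plus_gram r (f x) powr t / K) \<partial>M)"
    using \<open>K > 0\<close> f
    by (subst nn_integral_cmult[symmetric]) (auto simp: ennreal_mult[symmetric] intro!: nn_integral_cong)
  also have "\<dots> \<le> ennreal K * (\<integral>\<^sup>+ x. ennreal (\<Prod>l\<in>#pos_eigs_HHs (f x). (1 + l) powr \<theta>) \<partial>M)"
    using bound by (intro mult_left_mono nn_integral_mono ennreal_leI) auto
  also have "\<dots> < \<infinity>"
    using fin by (simp add: ennreal_mult_less_top)
  finally show ?thesis .
qed

lemma exp_capacity_csir_le:
  fixes H :: "nat \<Rightarrow> complex^'t^'r"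
  assumes "0 < W" "1 \<le> N" "0 \<le> \<rho>" "0 \<le> t"
  shows "exp (t * ln 2 / W * capacity_csir W \<rho> N H)
    \<le> (\<Sum>j=1..N. det_one_plus_gram (\<rho> / CARD('t)) (H j) powr t)"
proof -
  let ?D = "\<lambda>j. det_one_plus_gram (\<rho> / CARD('t)) (H j)"
  have D: "1 \<le> ?D j" for j
    using assms(3) by (intro one_le_det_one_plus_gram) simp
  then have D_nz: "?D j \<noteq> 0" for j
    by (metis not_one_le_zero)
  have "t * ln 2 / W * capacity_csir W \<rho> N H = (\<Sum>j=1..N. t * ln 2 / W * (W / N * (ln (?D j) / ln 2)))"
    by (simp add: capacity_csir_def det_one_plus_gram_def log_def sum_distrib_left)
  also have "\<dots> = (\<Sum>j=1..N. t / card {1..N} * ln (?D j))"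
    using assms(1) by (intro sum.cong) simp_all
  finally have "exp (t * ln 2 / W * capacity_csir W \<rho> N H) = (\<Prod>j=1..N. exp (t / card {1..N} * ln (?D j)))"
    by (simp add: exp_sum)
  also have "\<dots> = (\<Prod>j=1..N. ?D j powr (t / card {1..N}))"
    using D_nz by (intro prod.cong) (simp_all add: powr_def mult.commute)
  also have "\<dots> \<le> (\<Sum>j=1..N. ?D j powr t)"
    using assms D by (intro prod_powr_le_sum_powr) (auto intro: order.trans[OF zero_le_one])
  finally show ?thesis .
qed

theorem theorem4:
  fixes M :: "'a measure"
    and H :: "nat \<Rightarrow> 'a \<Rightarrow> complex ^'t ^'r"
    and W \<rho> :: real and N :: nat
  assumes "prob_space M"
    and "N \<ge> 1"
    and "W > 0" and "\<rho> > 0"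
    and "\<And>j. j \<in> {1..N} \<Longrightarrow> H j \<in> borel_measurable M"
    and "\<And>j. j \<in> {1..N} \<Longrightarrow> \<exists>\<theta>>0.
           (\<integral>\<^sup>+ x. ennreal (\<Prod>l\<in>#pos_eigs_HHs (H j x). (1 + l) powr \<theta>) \<partial>M) < \<infinity>"
  shows "light_tailed M (\<lambda>x. capacity_csir W \<rho> N (\<lambda>j. H j x))"
proof -
  obtain \<theta> where \<theta>: "\<And>j. j \<in> {1..N} \<Longrightarrow> 0 < \<theta> j \<and>
      (\<integral>\<^sup>+ x. ennreal (\<Prod>l\<in>#pos_eigs_HHs (H j x). (1 + l) powr \<theta> j) \<partial>M) < \<infinity>"
    using assms(6) by metis
  define t where "t = Min (\<theta> ` {1..N})"
  have "0 < t"
    using \<theta> assms(2) by (auto simp: t_def)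
  have t_le: "t \<le> \<theta> j" if "j \<in> {1..N}" for j
    using that by (simp add: t_def)
  let ?D = "\<lambda>j x. det_one_plus_gram (\<rho> / CARD('t)) (H j x)"
  have fin: "(\<integral>\<^sup>+ x. ennreal (?D j x powr t) \<partial>M) < \<infinity>" if "j \<in> {1..N}" for j
    using \<theta>[OF that] t_le[OF that] assms(4) \<open>0 < t\<close>
    by (intro nn_integral_det_one_plus_gram_powr_finite[OF assms(5)[OF that]]) auto
  have "exp (t * ln 2 / W * capacity_csir W \<rho> N (\<lambda>j. H j x)) \<le> (\<Sum>j=1..N. ?D j x powr t)" for x
    using assms(2-4) \<open>0 < t\<close> by (intro exp_capacity_csir_le) auto
  then have "(\<integral>\<^sup>+ x. ennreal (exp (t * ln 2 / W * capacity_csir W \<rho> N (\<lambda>j. H j x))) \<partial>M)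
      \<le> (\<integral>\<^sup>+ x. (\<Sum>j=1..N. ennreal (?D j x powr t)) \<partial>M)"
    by (intro nn_integral_mono) (simp add: ennreal_leI)
  also have "\<dots> = (\<Sum>j=1..N. \<integral>\<^sup>+ x. ennreal (?D j x powr t) \<partial>M)"
    using assms(5) by (intro nn_integral_sum) measurable
  also have "\<dots> < \<infinity>"
    using fin unfolding infinity_ennreal_def by (subst ennreal_sum_less_top) auto
  finally show ?thesis
    unfolding light_tailed_def using assms(3) \<open>0 < t\<close> by (intro exI[of _ "t * ln 2 / W"]) auto
qed

end
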